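(* The transducer $\mathcal O_H$ generates the optimal configurations in the Hanoi Towers Problem. More precisely, for $x,y \in\{0,1,2\}$, $x \neq y$, starting at state $t_{xy}$, and feeding the reversal $m_i(n)^R$ of the length $n$ row $i$ binary Gray code word from $M_n$ into $\mathcal O_H$ produces the reverse of the length $n$ ternary word representing the unique $n$ disk configuration at distance $i$ along the geodesic from $x^n$ to $y^n$ in $\Gamma_n$.
   Context: Let $X_2=\{0,1\}$, $X_3=\{0,1,2\}$. Define matrices $M_n$ of size $2^n \times n$ with entries in $X_2$ by $M_1 = \begin{bmatrix} 0 \\ 1 \end{bmatrix}$, $M_{n+1} = \begin{bmatrix} M_n & 0_n \\ M_n^R & 1_n \end{bmatrix}$, where $M_n^R$ is $M_n$ with the order of rows reversed and $0_n,1_n$ are constant columns of length $2^n$; $m_i(n)$ is row $i$ of $M_n$ (rows indexed from $0$). In the Hanoi Towers Problem on pegs $0,1,2$ with disks $1,\dots,n$, a configuration is encoded by the word $x_1\dots x_n$ over $X_3$, meaning disk $i$ is on peg $x_i$. For $0\le i<j\le 2$ let $a_{ij}$ be the ternary tree automorphism changing the first occurrence of $i$ or $j$ in a word to the other symbol (a move between pegs $i$ and $j$), and let $\Gamma_n$ be the graph whose vertices are the words of length $n$ over $X_3$, with an edge between $w$ and $a_{ij}(w)$ for each $a_{ij}$ (the Schreier graph of the Hanoi Towers group at level $n$). The 2 to 3 transducer $\mathcal O_H$ has six states $t_{xy}$, $x\ne y$ in $X_3$, defined as follows: if $z$ is the third element of $X_3$, then $t_{xy}(0w)=x\,t_{xz}(w)$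 and $t_{xy}(1w)=y\,t_{yz}(w)$, and $t_{xy}(\emptyset)=\emptyset$. *)

theory Defs
  imports Main
begin

(* Binary reflected Gray code matrix M_n as the list of its rows (row i = m_i(n)).
   M 0 = [[]] is an auxiliary base; the recursion yields M 1 = [[0],[1]]. *)
fun grayM :: "nat \<Rightarrow> nat list list" where
  "grayM 0 = [[]]"
| "grayM (Suc n) = map (\<lambda>r. r @ [0]) (grayM n) @ map (\<lambda>r. r @ [1]) (rev (grayM n))"

fun hmove :: "nat \<Rightarrow> nat \<Rightarrow> nat list \<Rightarrow> nat list" where
  "hmove i j [] = []"
| "hmove i j (c # w) = (if c = i then j # w else if c = j then i # w else c # hmove i j w)"

definition hverts :: "nat \<Rightarrow> nat list set" where
  "hverts n = {w. length w = n \<and> set w \<subseteq> {0,1,2}}"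

definition hedges :: "nat \<Rightarrow> (nat list \<times> nat list) set" where
  "hedges n = {(u, v). u \<in> hverts n \<and> (\<exists>i j. i < j \<and> j \<le> 2 \<and> v = hmove i j u)}"

definition hdist :: "nat \<Rightarrow> nat list \<Rightarrow> nat list \<Rightarrow> nat" where
  "hdist n u v = (LEAST k. (u, v) \<in> hedges n ^^ k)"

definition on_geodesic :: "nat \<Rightarrow> nat list \<Rightarrow> nat list \<Rightarrow> nat \<Rightarrow> nat list \<Rightarrow> bool" where
  "on_geodesic n u v i w \<longleftrightarrow> w \<in> hverts n \<and> hdist n u w = i \<and>
     hdist n u w + hdist n w v = hdist n u v"

(* the 2-to-3 transducer O_H; state t_xy is the pair (x,y), z = 3 - x - y the third peg *)
fun transOH :: "nat \<Rightarrow> nat \<Rightarrow> nat list \<Rightarrow> nat list" where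
  "transOH x y [] = []"
| "transOH x y (b # w) =
     (if b = 0 then x # transOH x (3 - x - y) w else y # transOH y (3 - x - y) w)"

end

theory Submission
  imports Defs
begin

(* The distance in Gamma_n from a configuration w to the perfect configuration p^n obeys the
   classical recursion on the largest disk: if it already sits on p it can be ignored; otherwise
   the smaller disks must first be gathered on the third peg, then the largest disk moves, and
   2^(n-1) - 1 further moves rebuild the tower on p.  A single move changes this quantity by at
   most one, which gives the matching lower bound.  Hence w lies at distance i on a geodesic
   from x^n to y^n iff d(w, x^n) = i and d(w, x^n) + d(w, y^n) = 2^n - 1.
   The Gray code recursion follows the same recursion on the largest disk: the first 2^(n-1)
   rows keep it on x while the smaller disks travel from x to the third peg z, the reversed
   second half keeps it on y while they travel from z to y.  Induction on n then shows both
   that the transducer output satisfies these two equations and that they determine w. *)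

lemma third_peg:
  fixes x y :: nat
  assumes "x < 3" "y < 3" "x \<noteq> y"
  shows "3 - x - y < 3" "3 - x - y \<noteq> x" "3 - x - y \<noteq> y" "3 - y - x = 3 - x - y"
  using assms by presburger+

lemma hmove_length [simp]: "length (hmove i j w) = length w"
  by (induction w) auto

lemma hmove_hmove [simp]: "hmove i j (hmove i j w) = w"
  by (induction w) auto

lemma hmove_eq_self: "i \<notin> set w \<Longrightarrow> j \<notin> set w \<Longrightarrow> hmove i j w = w"
  by (induction w) auto

lemma hmove_snoc:
  "hmove i j (u @ [c]) =
     (if i \<in> set u \<or> j \<in> set u then hmove i j u @ [c]
      else if c = i then u @ [j] else if c = j then u @ [i] else u @ [c])"
  by (induction u) auto

lemma hmove_in_hverts: "w \<in> hverts n \<Longrightarrow> i \<le> 2 \<Longrightarrow> j \<le> 2 \<Longrightarrow> hmove i j w \<in> hverts n"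
  unfolding hverts_def by (induction w arbitrary: n) auto

lemma snoc_in_hverts_iff: "u @ [c] \<in> hverts (Suc n) \<longleftrightarrow> u \<in> hverts n \<and> c < 3"
  unfolding hverts_def by auto

lemma hverts_SucE:
  assumes "w \<in> hverts (Suc n)"
  obtains u c where "w = u @ [c]" "u \<in> hverts n" "c < 3"
proof -
  obtain u c where "w = u @ [c]"
    using assms unfolding hverts_def by (auto simp: length_Suc_conv_rev)
  with assms show thesis
    using that by (simp add: snoc_in_hverts_iff)
qed

lemma replicate_in_hverts: "p < 3 \<Longrightarrow> replicate n p \<in> hverts n"
  unfolding hverts_def by auto

lemma hedges_hmoveI: "u \<in> hverts n \<Longrightarrow> i < j \<Longrightarrow> j \<le> 2 \<Longrightarrow> (u, hmove i j u) \<in> hedges n"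
  unfolding hedges_def by blast

lemma hedgesE:
  assumes "(u, v) \<in> hedges n"
  obtains i j where "u \<in> hverts n" "v \<in> hverts n" "i < j" "j \<le> 2" "v = hmove i j u"
  using assms hmove_in_hverts unfolding hedges_def by force

lemma hedges_sym:
  assumes "(u, v) \<in> hedges n"
  shows "(v, u) \<in> hedges n"
proof -
  obtain i j where "v \<in> hverts n" "i < j" "j \<le> 2" "v = hmove i j u"
    using assms by (elim hedgesE)
  then show ?thesis
    using hedges_hmoveI[of v n i j] by simp
qed

lemma relpow_hedges_sym: "(u, v) \<in> hedges n ^^ k \<Longrightarrow> (v, u) \<in> hedges n ^^ k"
proof (induction k arbitrary: v)
  case 0
  then show ?case by simp
next
  case (Suc k)
  then obtain y where "(u, y) \<in> hedges n ^^ k" "(y, v) \<in> hedges n"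
    by (blast elim: relpow_Suc_E)
  then show ?case
    using Suc.IH hedges_sym relpow_Suc_I2 by metis
qed

lemma hdist_sym: "hdist n u v = hdist n v u"
proof -
  have "(\<lambda>k. (u, v) \<in> hedges n ^^ k) = (\<lambda>k. (v, u) \<in> hedges n ^^ k)"
    using relpow_hedges_sym by blast
  then show ?thesis
    unfolding hdist_def by simp
qed

lemma hdist_eqI:
  assumes "(u, v) \<in> hedges n ^^ k" and "\<And>k'. (u, v) \<in> hedges n ^^ k' \<Longrightarrow> k \<le> k'"
  shows "hdist n u v = k"
  unfolding hdist_def using assms by (rule Least_equality)

definition reach_within :: "nat \<Rightarrow> nat \<Rightarrow> nat list \<Rightarrow> nat list \<Rightarrow> bool" where
  "reach_within n k u v \<longleftrightarrow> (\<exists>k'\<le>k. (u, v) \<in> hedges n ^^ k')"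

lemma reach_within_refl: "reach_within n k u u"
  unfolding reach_within_def by (blast intro: relpow_0_I)

lemma reach_within_edge: "(u, v) \<in> hedges n \<Longrightarrow> reach_within n 1 u v"
  unfolding reach_within_def by (intro exI[of _ 1]) simp

lemma reach_within_trans:
  "reach_within n a u v \<Longrightarrow> reach_within n b v w \<Longrightarrow> reach_within n (a + b) u w"
  unfolding reach_within_def by (blast intro: add_mono relpow_trans)

lemma reach_within_mono: "reach_within n k u v \<Longrightarrow> k \<le> k' \<Longrightarrow> reach_within n k' u v"
  unfolding reach_within_def by (blast intro: le_trans)

text \<open>Putting a larger disk below keeps every move of the smaller disks, but a loop (a move
  between two pegs without smaller disks) may turn into a move of the new disk; hence only
  \<^const>\<open>reach_within\<close> is preserved, not the path length.\<close>

lemma reach_within_snoc_edge: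
  assumes "(u, v) \<in> hedges n" "c < 3"
  shows "reach_within (Suc n) 1 (u @ [c]) (v @ [c])"
proof (cases "u = v")
  case True
  then show ?thesis by (simp add: reach_within_refl)
next
  case False
  obtain i j where ij: "u \<in> hverts n" "i < j" "j \<le> 2" "v = hmove i j u"
    using assms(1) by (elim hedgesE)
  with False have "i \<in> set u \<or> j \<in> set u"
    using hmove_eq_self by metis
  with ij have "hmove i j (u @ [c]) = v @ [c]"
    by (simp add: hmove_snoc)
  moreover have "u @ [c] \<in> hverts (Suc n)"
    using ij assms(2) by (simp add: snoc_in_hverts_iff)
  ultimately have "(u @ [c], v @ [c]) \<in> hedges (Suc n)"
    using ij hedges_hmoveI[of "u @ [c]" "Suc n" i j] by simp
  then show ?thesis
    by (rule reach_within_edge)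
qed

lemma reach_within_snoc:
  "reach_within n k u v \<Longrightarrow> c < 3 \<Longrightarrow> reach_within (Suc n) k (u @ [c]) (v @ [c])"
proof -
  have "(u, v) \<in> hedges n ^^ k \<Longrightarrow> reach_within (Suc n) k (u @ [c]) (v @ [c])" if "c < 3" for k v
  proof (induction k arbitrary: v)
    case 0
    then show ?case by (simp add: reach_within_refl)
  next
    case (Suc k)
    then obtain y where "(u, y) \<in> hedges n ^^ k" "(y, v) \<in> hedges n"
      by (blast elim: relpow_Suc_E)
    then have "reach_within (Suc n) k (u @ [c]) (y @ [c])"
      and "reach_within (Suc n) 1 (y @ [c]) (v @ [c])"
      using Suc.IH reach_within_snoc_edge[OF _ that] by blast+
    then show ?case
      using reach_within_trans by fastforce
  qed
  then show "reach_within n k u v \<Longrightarrow> c < 3 \<Longrightarrow> reach_within (Suc n) k (u @ [c]) (v @ [c])"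
    unfolding reach_within_def[of n] by (blast intro: reach_within_mono)
qed

text \<open>The largest disk is the last letter of a configuration, so the recursion on the largest
  disk runs over the reversed word.\<close>

fun dist_perfect_rev :: "nat list \<Rightarrow> nat \<Rightarrow> nat" where
  "dist_perfect_rev [] p = 0"
| "dist_perfect_rev (c # v) p =
     (if c = p then dist_perfect_rev v p else dist_perfect_rev v (3 - c - p) + 2 ^ length v)"

definition dist_perfect :: "nat list \<Rightarrow> nat \<Rightarrow> nat" where
  "dist_perfect w p = dist_perfect_rev (rev w) p"

lemma dist_perfect_Nil [simp]: "dist_perfect [] p = 0"
  by (simp add: dist_perfect_def)

lemma dist_perfect_snoc [simp]:
  "dist_perfect (u @ [c]) p =
     (if c = p then dist_perfect u p else dist_perfect u (3 - c - p) + 2 ^ length u)"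
  by (simp add: dist_perfect_def)

lemma dist_perfect_replicate:
  assumes "q < 3" "p < 3"
  shows "dist_perfect (replicate m q) p = (if q = p then 0 else 2 ^ m - 1)"
  using assms(2)
proof (induction m arbitrary: p)
  case 0
  then show ?case by simp
next
  case (Suc m)
  show ?case
  proof (cases "q = p")
    case True
    then show ?thesis using Suc by (simp add: replicate_append_same[symmetric])
  next
    case False
    then show ?thesis
      using Suc third_peg[OF assms(1) Suc.prems False] by (simp add: replicate_append_same[symmetric])
  qed
qed

lemma dist_perfect_le: "set u \<subseteq> {0,1,2} \<Longrightarrow> dist_perfect u p \<le> 2 ^ length u - 1"
proof (induction u arbitrary: p rule: rev_induct)
  case Nil
  then show ?case by simp
next
  case (snoc c u)
  then have "dist_perfect u p \<le> 2 ^ length u - 1" "dist_perfect u (3 - c - p) \<le> 2 ^ length u - 1"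
    by simp_all
  then show ?case by auto
qed

lemma dist_perfect_hmove_le:
  assumes "set w \<subseteq> {0,1,2}" "i < j" "j \<le> 2" "p < 3"
  shows "dist_perfect (hmove i j w) p \<le> dist_perfect w p + 1"
  using assms(1,4)
proof (induction w arbitrary: p rule: rev_induct)
  case Nil
  then show ?case by simp
next
  case (snoc c u)
  show ?case
  proof (cases "i \<in> set u \<or> j \<in> set u")
    case True
    have "c \<noteq> p \<Longrightarrow> 3 - c - p < 3" by simp
    then show ?thesis using snoc True by (simp add: hmove_snoc)
  next
    case False
    \<comment> \<open>all smaller disks sit on the peg k that is not involved in the move\<close>
    define k where "k = 3 - i - j"
    have "y = k" if "y \<in> set u" for y
    proof -
      have "y \<in> {0,1,2}" "y \<noteq> i" "y \<noteq> j"
        using that False snoc.prems by auto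
      then show ?thesis
        using assms(2,3) unfolding k_def by auto
    qed
    then have u: "u = replicate (length u) k"
      by (simp add: replicate_length_same)
    have k: "k < 3" and "(i = 0 \<and> j = 1) \<or> (i = 0 \<and> j = 2) \<or> (i = 1 \<and> j = 2)"
      using assms(2,3) unfolding k_def by auto
    moreover have "c = 0 \<or> c = 1 \<or> c = 2" "p = 0 \<or> p = 1 \<or> p = 2"
      using snoc.prems by auto
    moreover have "dist_perfect u r = (if k = r then 0 else 2 ^ length u - 1)" if "r < 3" for r
      using dist_perfect_replicate[OF k that] u by metis
    ultimately show ?thesis
      using False by (elim disjE) (simp_all add: hmove_snoc k_def)
  qed
qed

lemma dist_perfect_lower:
  assumes "(w, replicate n p) \<in> hedges n ^^ k" "p < 3"
  shows "dist_perfect w p \<le> k"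
  using assms(1)
proof (induction k arbitrary: w)
  case 0
  then show ?case using dist_perfect_replicate[OF assms(2,2)] by simp
next
  case (Suc k)
  then obtain y where wy: "(w, y) \<in> hedges n" and "(y, replicate n p) \<in> hedges n ^^ k"
    by (blast elim: relpow_Suc_E2)
  from this(2) have "dist_perfect y p \<le> k" by (rule Suc.IH)
  moreover obtain i j where "y \<in> hverts n" "i < j" "j \<le> 2" "w = hmove i j y"
    using hedges_sym[OF wy] by (elim hedgesE)
  then have "dist_perfect w p \<le> dist_perfect y p + 1"
    using dist_perfect_hmove_le assms(2) unfolding hverts_def by blast
  ultimately show ?case by simp
qed

lemma hedges_move_largest:
  assumes "e < 3" "c < 3" "p < 3" "e \<noteq> c" "e \<noteq> p" "c \<noteq> p"
  shows "(replicate m e @ [c], replicate m e @ [p]) \<in> hedges (Suc m)"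
proof -
  have "hmove (min c p) (max c p) (replicate m e @ [c]) = replicate m e @ [p]"
    using assms by (auto simp: hmove_snoc min_def max_def)
  moreover have "replicate m e @ [c] \<in> hverts (Suc m)"
    using assms by (simp add: snoc_in_hverts_iff replicate_in_hverts)
  moreover have "min c p < max c p" "max c p \<le> 2"
    using assms by auto
  ultimately show ?thesis
    using hedges_hmoveI[of "replicate m e @ [c]" "Suc m" "min c p" "max c p"] by simp
qed

lemma dist_perfect_upper:
  "w \<in> hverts m \<Longrightarrow> p < 3 \<Longrightarrow> reach_within m (dist_perfect w p) w (replicate m p)"
proof (induction m arbitrary: w p)
  case 0
  then show ?case by (simp add: hverts_def reach_within_refl)
next
  case (Suc m)
  obtain u c where w: "w = u @ [c]" and u: "u \<in> hverts m" and c: "c < 3"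
    using Suc.prems(1) by (rule hverts_SucE)
  have target: "replicate (Suc m) p = replicate m p @ [p]"
    by (simp add: replicate_append_same)
  show ?case
  proof (cases "c = p")
    case True
    have "reach_within (Suc m) (dist_perfect u p) (u @ [c]) (replicate m p @ [c])"
      using Suc.IH[OF u Suc.prems(2)] c by (rule reach_within_snoc)
    then show ?thesis
      unfolding w target using True by simp
  next
    case False
    define e where "e = 3 - c - p"
    have e: "e < 3" "e \<noteq> c" "e \<noteq> p"
      using third_peg[OF c Suc.prems(2) False] unfolding e_def by auto
    have to_third: "reach_within (Suc m) (dist_perfect u e) (u @ [c]) (replicate m e @ [c])"
      using Suc.IH[OF u e(1)] c by (rule reach_within_snoc)
    have largest: "reach_within (Suc m) 1 (replicate m e @ [c]) (replicate m e @ [p])"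
      using hedges_move_largest[OF e(1) c Suc.prems(2) e(2,3) False] by (rule reach_within_edge)
    have "reach_within m (2 ^ m - 1) (replicate m e) (replicate m p)"
      using Suc.IH[OF replicate_in_hverts[OF e(1)] Suc.prems(2)] e(3)
      by (simp add: dist_perfect_replicate[OF e(1) Suc.prems(2)])
    then have rebuild: "reach_within (Suc m) (2 ^ m - 1) (replicate m e @ [p]) (replicate m p @ [p])"
      using Suc.prems(2) by (rule reach_within_snoc)
    have "dist_perfect (u @ [c]) p = dist_perfect u e + 1 + (2 ^ m - 1)"
      using u False unfolding e_def hverts_def by simp
    then show ?thesis
      using reach_within_trans[OF reach_within_trans[OF to_third largest] rebuild]
      unfolding w target by simp
  qed
qed

lemma hdist_to_perfect:
  assumes "w \<in> hverts n" "p < 3"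
  shows "hdist n w (replicate n p) = dist_perfect w p"
proof -
  obtain k where k: "k \<le> dist_perfect w p" "(w, replicate n p) \<in> hedges n ^^ k"
    using dist_perfect_upper[OF assms] unfolding reach_within_def by blast
  have lower: "dist_perfect w p \<le> k'" if "(w, replicate n p) \<in> hedges n ^^ k'" for k'
    using dist_perfect_lower[OF that assms(2)] .
  have "k = dist_perfect w p"
    using k(1) lower[OF k(2)] by simp
  with k(2) have "(w, replicate n p) \<in> hedges n ^^ dist_perfect w p"
    by simp
  then show ?thesis
    using lower by (rule hdist_eqI)
qed

lemma hdist_from_perfect:
  "w \<in> hverts n \<Longrightarrow> p < 3 \<Longrightarrow> hdist n (replicate n p) w = dist_perfect w p"
  by (metis hdist_sym hdist_to_perfect)

lemma on_geodesic_perfect_iff: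
  assumes "x < 3" "y < 3" "x \<noteq> y"
  shows "on_geodesic n (replicate n x) (replicate n y) i w \<longleftrightarrow>
           w \<in> hverts n \<and> dist_perfect w x = i \<and> dist_perfect w x + dist_perfect w y = 2 ^ n - 1"
proof -
  have "hdist n (replicate n x) (replicate n y) = dist_perfect (replicate n y) x"
    using hdist_from_perfect[OF replicate_in_hverts[OF assms(2)] assms(1)] .
  also have "\<dots> = 2 ^ n - 1"
    using assms by (simp add: dist_perfect_replicate)
  finally have "hdist n (replicate n x) (replicate n y) = 2 ^ n - 1" .
  then show ?thesis
    unfolding on_geodesic_def
    using hdist_from_perfect[OF _ assms(1)] hdist_to_perfect[OF _ assms(2)] by auto
qed

lemma length_grayM: "length (grayM n) = 2 ^ n"
  by (induction n) auto

lemma grayM_Suc_nth: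
  assumes "i < 2 ^ Suc n"
  shows "grayM (Suc n) ! i =
           (if i < 2 ^ n then grayM n ! i @ [0] else grayM n ! (2 ^ Suc n - 1 - i) @ [1])"
proof (cases "i < 2 ^ n")
  case True
  then show ?thesis by (simp add: nth_append length_grayM)
next
  case False
  then have "grayM (Suc n) ! i = rev (grayM n) ! (i - 2 ^ n) @ [1]"
    using assms by (simp add: nth_append length_grayM)
  also have "\<dots> = grayM n ! (2 ^ Suc n - 1 - i) @ [1]"
    using False assms by (simp add: rev_nth length_grayM mult_2)
  finally show ?thesis using False by simp
qed

definition gray_config :: "nat \<Rightarrow> nat \<Rightarrow> nat \<Rightarrow> nat \<Rightarrow> nat list" where
  "gray_config n x y i = rev (transOH x y (rev (grayM n ! i)))"

lemma gray_config_Suc: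
  assumes "i < 2 ^ Suc n"
  shows "gray_config (Suc n) x y i =
           (if i < 2 ^ n then gray_config n x (3 - x - y) i @ [x]
            else gray_config n y (3 - x - y) (2 ^ Suc n - 1 - i) @ [y])"
  unfolding gray_config_def grayM_Suc_nth[OF assms] by simp

lemma gray_config_props:
  assumes "x < 3" "y < 3" "x \<noteq> y" "i < 2 ^ n"
  shows "gray_config n x y i \<in> hverts n \<and> dist_perfect (gray_config n x y i) x = i \<and>
         dist_perfect (gray_config n x y i) y = 2 ^ n - 1 - i"
  using assms
proof (induction n arbitrary: x y i)
  case 0
  then show ?case by (simp add: gray_config_def hverts_def)
next
  case (Suc n)
  define z where "z = 3 - x - y"
  have z: "z < 3" "z \<noteq> x" "z \<noteq> y" "3 - y - x = z"
    using third_peg[OF Suc.prems(1-3)] unfolding z_def by auto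
  show ?case
  proof (cases "i < 2 ^ n")
    case True
    let ?u = "gray_config n x z i"
    have u: "?u \<in> hverts n" "dist_perfect ?u x = i" "dist_perfect ?u z = 2 ^ n - 1 - i"
      using Suc.IH[OF Suc.prems(1) z(1) z(2)[symmetric] True] by auto
    have "gray_config (Suc n) x y i = ?u @ [x]"
      using gray_config_Suc[OF Suc.prems(4)] True z_def by simp
    moreover have "length ?u = n"
      using u(1) by (simp add: hverts_def)
    moreover have "2 ^ n - 1 - i + 2 ^ n = 2 ^ Suc n - 1 - i"
      using True by simp
    ultimately show ?thesis
      using u Suc.prems(1,3) z_def by (simp add: snoc_in_hverts_iff)
  next
    case False
    define j where "j = 2 ^ Suc n - 1 - i"
    have j: "j < 2 ^ n" "2 ^ n - 1 - j + 2 ^ n = i"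
      using False Suc.prems(4) unfolding j_def by auto
    let ?u = "gray_config n y z j"
    have u: "?u \<in> hverts n" "dist_perfect ?u y = j" "dist_perfect ?u z = 2 ^ n - 1 - j"
      using Suc.IH[OF Suc.prems(2) z(1) z(3)[symmetric] j(1)] by auto
    have "gray_config (Suc n) x y i = ?u @ [y]"
      using gray_config_Suc[OF Suc.prems(4)] False z_def j_def by simp
    moreover have "length ?u = n"
      using u(1) by (simp add: hverts_def)
    ultimately show ?thesis
      using u j Suc.prems(2,3) z unfolding j_def by (simp add: snoc_in_hverts_iff)
  qed
qed

lemma gray_config_unique:
  assumes "w \<in> hverts n" "x < 3" "y < 3" "x \<noteq> y"
    and "dist_perfect w x + dist_perfect w y = 2 ^ n - 1"
  shows "w = gray_config n x y (dist_perfect w x)"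
  using assms
proof (induction n arbitrary: w x y)
  case 0
  then show ?case by (simp add: gray_config_def hverts_def)
next
  case (Suc n)
  define z where "z = 3 - x - y"
  have z: "z < 3" "z \<noteq> x" "z \<noteq> y" "3 - y - x = z"
    using third_peg[OF Suc.prems(2-4)] unfolding z_def by auto
  obtain u c where w: "w = u @ [c]" and u: "u \<in> hverts n" and c: "c < 3"
    using Suc.prems(1) by (rule hverts_SucE)
  have len: "length u = n"
    using u by (simp add: hverts_def)
  have bound: "dist_perfect u q < 2 ^ n" for q
  proof -
    have "dist_perfect u q \<le> 2 ^ n - 1"
      using dist_perfect_le[of u q] u len by (simp add: hverts_def)
    moreover have "(0::nat) < 2 ^ n" by simp
    ultimately show ?thesis by linarith
  qed
  have "c = x \<or> c = y \<or> c = z"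
    using c Suc.prems(2-4) unfolding z_def by auto
  then show ?case
  proof (elim disjE)
    assume "c = x"
    then have d: "dist_perfect w x = dist_perfect u x" "dist_perfect w y = dist_perfect u z + 2 ^ n"
      using w len Suc.prems(4) z_def by auto
    then have "u = gray_config n x z (dist_perfect u x)"
      using Suc.IH[OF u Suc.prems(2) z(1) z(2)[symmetric]] Suc.prems(5) by simp
    then show ?thesis
      using gray_config_Suc[of "dist_perfect u x" n x y] bound[of x] d w \<open>c = x\<close> z_def by simp
  next
    assume "c = y"
    then have d: "dist_perfect w x = dist_perfect u z + 2 ^ n" "dist_perfect w y = dist_perfect u y"
      using w len Suc.prems(4) z by auto
    then have "u = gray_config n y z (dist_perfect u y)"
      using Suc.IH[OF u Suc.prems(3) z(1) z(3)[symmetric]] Suc.prems(5) by simp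
    moreover have "dist_perfect w x < 2 ^ Suc n" "\<not> dist_perfect w x < 2 ^ n"
      "2 ^ Suc n - 1 - dist_perfect w x = dist_perfect u y"
      using d bound[of z] Suc.prems(5) by auto
    ultimately show ?thesis
      using gray_config_Suc[of "dist_perfect w x" n x y] w \<open>c = y\<close> z_def by simp
  next
    assume "c = z"
    then have "2 ^ n + 2 ^ n \<le> dist_perfect w x + dist_perfect w y"
      using w z len by (auto intro: add_mono)
    also have "\<dots> < 2 ^ Suc n"
      using Suc.prems(5) by simp
    finally show ?thesis
      by simp
  qed
qed

theorem mainTheorem12:
  fixes n i x y :: nat
  assumes "1 \<le> n" and "x < 3" and "y < 3" and "x \<noteq> y" and "i < 2 ^ n"
  shows "(\<exists>!w. on_geodesic n (replicate n x) (replicate n y) i w) \<and>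
         on_geodesic n (replicate n x) (replicate n y) i
           (rev (transOH x y (rev (grayM n ! i))))"
proof -
  note geodesic = on_geodesic_perfect_iff[OF assms(2-4)]
  have on_geodesic: "on_geodesic n (replicate n x) (replicate n y) i (gray_config n x y i)"
    using gray_config_props[OF assms(2-5)] assms(5) unfolding geodesic by simp
  have unique: "w = gray_config n x y i"
    if "on_geodesic n (replicate n x) (replicate n y) i w" for w
  proof -
    have w: "w \<in> hverts n" and "dist_perfect w x = i"
      and sum: "dist_perfect w x + dist_perfect w y = 2 ^ n - 1"
      using that unfolding geodesic by auto
    then show ?thesis
      using gray_config_unique[OF w assms(2-4) sum] by simp
  qed
  have "\<exists>!w. on_geodesic n (replicate n x) (replicate n y) i w"
    using on_geodesic unique by (rule ex1I)
  then show ?thesis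
    using on_geodesic unfolding gray_config_def by (rule conjI)
qed

end
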